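(* Let $n\ge1$. There are constants $C>0$ and $\delta_0>0$ depending only on $n$ such that for every $0<\delta<\delta_0$: (a) a complex symmetric $n\times n$ matrix $B$ lies in $M_\delta^+$ if and only if $\langle Bx,x\rangle\in N_\delta^+$ for every nonzero $x\in\mathbb R^n$; (b) if $h\in E_\delta$ and $0\ne x\in\mathbb R^n$, then $h^Tx\in V_{C\delta}$; (c) if $z\in V_\delta$, $z\ne0$, then $\langle z,z\rangle\in N_{C\delta}^+$; (d) if $h\in E_\delta$, then $hh^T\in M_{C\delta}^+$; (e) if $A\in M_\delta$ and $|B-I|<\delta$, then $AB\in M_{C\delta}$ and $BA\in M_{C\delta}$; (f) if $A\in M_\delta$ and $B\in SO(n,\mathbb R)$, then $AB\in M_{C\delta}$ and $BA\in M_{C\delta}$.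
   Context: $\langle u,v\rangle=\sum_j u_jv_j$ (bilinear). $|\cdot|$ is the Euclidean norm on vectors and the operator norm on matrices. Writing $z=x+iy$ with $x,y$ real: $N_\delta^+=\{z\in\mathbb C:|y|<\delta x\}$; $V_\delta=\{z\in\mathbb C^n:|y|<\delta|x|\}$; $M_\delta=\{z\in{\rm Mat}(n,\mathbb C):|y|<\delta|x|\}$; $M_\delta^+=\{z\in{\rm Mat}(n,\mathbb C): z^T=z,\ \delta x+y \text{ and } \delta x-y \text{ positive definite}\}$. $E_\delta=\{gp: g\in{\rm Mat}(n,\mathbb R),\ \det g>0,\ p\in GL(n,\mathbb C),\ |p-I|<\delta\}$. The paper's convention is that writing "$w\in V_\delta$" in a conclusion means $w\in V_\epsilon$ with $\epsilon=O(\delta)$; this has been made explicit via the constant $C$. *)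

theory Defs
  imports "HOL-Analysis.Analysis"
begin

definition Rev :: "complex^'n \<Rightarrow> real^'n" where
  "Rev z = (\<chi> i. Re (z $ i))"

definition Imv :: "complex^'n \<Rightarrow> real^'n" where
  "Imv z = (\<chi> i. Im (z $ i))"

definition Rem :: "complex^'n^'m \<Rightarrow> real^'n^'m" where
  "Rem z = (\<chi> i j. Re (z $ i $ j))"

definition Imm :: "complex^'n^'m \<Rightarrow> real^'n^'m" where
  "Imm z = (\<chi> i j. Im (z $ i $ j))"

definition cvec :: "real^'n \<Rightarrow> complex^'n" where
  "cvec x = (\<chi> i. complex_of_real (x $ i))"

definition cmat :: "real^'n^'m \<Rightarrow> complex^'n^'m" where
  "cmat g = (\<chi> i j. complex_of_real (g $ i $ j))"

definition opnorm :: "'a::real_normed_field^'n^'m \<Rightarrow> real" where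
  "opnorm A = onorm (\<lambda>v. A *v v)"

definition bil :: "complex^'n \<Rightarrow> complex^'n \<Rightarrow> complex" where
  "bil u v = (\<Sum>j\<in>UNIV. u $ j * v $ j)"

definition pos_def :: "real^'n^'n \<Rightarrow> bool" where
  "pos_def A \<longleftrightarrow> (\<forall>v. v \<noteq> 0 \<longrightarrow> v \<bullet> (A *v v) > 0)"

definition Nplus :: "real \<Rightarrow> complex set" where
  "Nplus \<delta> = {z. \<bar>Im z\<bar> < \<delta> * Re z}"

definition Vd :: "real \<Rightarrow> (complex^'n) set" where
  "Vd \<delta> = {z. norm (Imv z) < \<delta> * norm (Rev z)}"

definition Md :: "real \<Rightarrow> (complex^'n^'n) set" where
  "Md \<delta> = {z. opnorm (Imm z) < \<delta> * opnorm (Rem z)}"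

definition Mplus :: "real \<Rightarrow> (complex^'n^'n) set" where
  "Mplus \<delta> = {z. transpose z = z \<and> pos_def (\<delta> *\<^sub>R Rem z + Imm z)
                             \<and> pos_def (\<delta> *\<^sub>R Rem z - Imm z)}"

definition Ed :: "real \<Rightarrow> (complex^'n^'n) set" where
  "Ed \<delta> = {cmat g ** p | g p. det g > 0 \<and> invertible p \<and> opnorm (p - mat 1) < \<delta>}"

end

theory Submission
  imports Defs
begin

text \<open>Part (a) just unfolds positive definiteness: the real and imaginary parts of
  \<open>\<langle>Bx,x\<rangle>\<close> are the quadratic forms of \<open>Re B\<close> and \<open>Im B\<close>.  The other parts are first-order
  perturbation estimates: membership in the cones says that the imaginary part is small relative
  to the real part, and multiplying by something close to the identity, or by a real orthogonal
  matrix, changes real and imaginary parts by amounts controlled by operator norms.  Since a real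
  matrix and its transpose have the same operator norm, no constant depends on \<open>n\<close>:
  \<open>C = 8\<close> and \<open>\<delta>\<^sub>0 = 1/4\<close> suffice.\<close>

lemma matrix_add_rdistrib: "(B + C) ** A = B ** A + C ** A"
  for A :: "'a::semiring_1^'p^'n"
  by (vector matrix_matrix_mult_def sum.distrib[symmetric] field_simps)

lemma norm_matrix_vector_mult_le: "norm (A *v v) \<le> opnorm A * norm v"
  for A :: "'a::{real_normed_field,euclidean_space}^'n^'m"
  unfolding opnorm_def by (rule onorm) simp

lemma opnorm_nonneg: "0 \<le> opnorm A"
  for A :: "'a::{real_normed_field,euclidean_space}^'n^'m"
  unfolding opnorm_def by (rule onorm_pos_le) simp

lemma opnorm_le: "(\<And>v. norm (A *v v) \<le> K * norm v) \<Longrightarrow> opnorm A \<le> K"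
  for A :: "'a::{real_normed_field,euclidean_space}^'n^'m"
  unfolding opnorm_def by (rule onorm_le)

lemma opnorm_matrix_mul_le: "opnorm (A ** B) \<le> opnorm A * opnorm B"
  for A :: "'a::{real_normed_field,euclidean_space}^'n^'m" and B :: "'a^'p^'n"
  using onorm_compose[of "(*v) A" "(*v) B"]
  by (simp add: opnorm_def o_def matrix_vector_mul_assoc)

lemma opnorm_add_le: "opnorm (A + B) \<le> opnorm A + opnorm B"
  for A :: "'a::{real_normed_field,euclidean_space}^'n^'m"
  using onorm_triangle[of "(*v) A" "(*v) B"]
  by (simp add: opnorm_def matrix_vector_mult_add_rdistrib)

lemma opnorm_diff_le: "opnorm (A - B) \<le> opnorm A + opnorm B"
  for A :: "'a::{real_normed_field,euclidean_space}^'n^'m"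
proof -
  have "(*v) (- B) = (\<lambda>v. - (B *v v))"
    by (simp add: fun_eq_iff vec_eq_iff matrix_vector_mult_def sum_negf)
  then show ?thesis
    using opnorm_add_le[of A "- B"] onorm_neg[of "(*v) B"] by (simp add: opnorm_def)
qed

lemma opnorm_transpose_le: "opnorm (transpose A) \<le> opnorm A"
  for A :: "real^'n^'m"
proof (rule opnorm_le)
  fix v
  define w where "w = transpose A *v v"
  have "norm w ^ 2 = v \<bullet> (A *v w)"
    by (simp add: w_def power2_norm_eq_inner dot_lmul_matrix)
  also have "\<dots> \<le> norm v * (opnorm A * norm w)"
    by (rule order_trans[OF norm_cauchy_schwarz mult_left_mono[OF norm_matrix_vector_mult_le]]) simp
  finally have "norm w * norm w \<le> (opnorm A * norm v) * norm w"
    by (simp add: power2_eq_square mult_ac)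
  then show "norm w \<le> opnorm A * norm v"
    by (cases "w = 0") (simp_all add: opnorm_nonneg)
qed

lemma opnorm_transpose: "opnorm (transpose A) = opnorm A"
  for A :: "real^'n^'m"
  using opnorm_transpose_le[of A] opnorm_transpose_le[of "transpose A"] by simp

lemma norm_vector_matrix_mult_le: "norm (x v* A) \<le> opnorm A * norm x"
  for A :: "real^'n^'m"
  using norm_matrix_vector_mult_le[of "transpose A" x] by (simp add: opnorm_transpose)

lemma opnorm_orthogonal_matrix_le: "orthogonal_matrix B \<Longrightarrow> opnorm B \<le> 1"
  for B :: "real^'n^'n"
  by (rule opnorm_le)
    (simp add: orthogonal_transformation_matrix orthogonal_transformation_norm)

lemma opnorm_matrix_mul_orthogonal_right:
  fixes B :: "real^'n^'n" and M :: "real^'n^'m"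
  assumes "orthogonal_matrix B"
  shows "opnorm (M ** B) = opnorm M"
proof (rule antisym)
  have B: "opnorm B \<le> 1" and Bt: "opnorm (transpose B) \<le> 1"
    using assms by (simp_all add: opnorm_orthogonal_matrix_le orthogonal_matrix_transpose)
  show "opnorm (M ** B) \<le> opnorm M"
    using opnorm_matrix_mul_le[of M B] mult_left_mono[OF B opnorm_nonneg[of M]] by simp
  have "M = (M ** B) ** transpose B"
    using assms by (simp add: orthogonal_matrix_def flip: matrix_mul_assoc)
  then show "opnorm M \<le> opnorm (M ** B)"
    using opnorm_matrix_mul_le[of "M ** B" "transpose B"]
      mult_left_mono[OF Bt opnorm_nonneg[of "M ** B"]] by simp
qed

lemma opnorm_matrix_mul_orthogonal_left:
  fixes B :: "real^'n^'n" and M :: "real^'m^'n"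
  assumes "orthogonal_matrix B"
  shows "opnorm (B ** M) = opnorm M"
  using opnorm_matrix_mul_orthogonal_right[OF orthogonal_matrix_transpose[THEN iffD2, OF assms],
      of "transpose M"]
  by (simp flip: matrix_transpose_mul add: opnorm_transpose)

lemma Rev_matrix_vector_mult_cvec: "Rev (A *v cvec x) = Rem A *v x"
  by (simp add: Rev_def Rem_def cvec_def matrix_vector_mult_def vec_eq_iff Re_sum)

lemma Imv_matrix_vector_mult_cvec: "Imv (A *v cvec x) = Imm A *v x"
  by (simp add: Imv_def Imm_def cvec_def matrix_vector_mult_def vec_eq_iff Im_sum)

lemma Rem_matrix_mul: "Rem (A ** B) = Rem A ** Rem B - Imm A ** Imm B"
  by (simp add: Rem_def Imm_def matrix_matrix_mult_def vec_eq_iff Re_sum sum_subtractf)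

lemma Imm_matrix_mul: "Imm (A ** B) = Rem A ** Imm B + Imm A ** Rem B"
  by (simp add: Rem_def Imm_def matrix_matrix_mult_def vec_eq_iff Im_sum sum.distrib)

lemma Rev_cvec_vector_matrix_mult: "Rev (cvec x v* A) = x v* Rem A"
  by (simp add: Rev_def Rem_def cvec_def vector_matrix_mult_def vec_eq_iff Re_sum)

lemma Imv_cvec_vector_matrix_mult: "Imv (cvec x v* A) = x v* Imm A"
  by (simp add: Imv_def Imm_def cvec_def vector_matrix_mult_def vec_eq_iff Im_sum)

lemma cvec_vector_matrix_mult_cmat: "cvec x v* cmat A = cvec (x v* A)"
  by (simp add: cmat_def cvec_def vector_matrix_mult_def vec_eq_iff)

lemma Rem_add: "Rem (A + B) = Rem A + Rem B"
  by (simp add: Rem_def vec_eq_iff)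

lemma Imm_add: "Imm (A + B) = Imm A + Imm B"
  by (simp add: Imm_def vec_eq_iff)

lemma Rem_diff: "Rem (A - B) = Rem A - Rem B"
  by (simp add: Rem_def vec_eq_iff)

lemma Imm_diff: "Imm (A - B) = Imm A - Imm B"
  by (simp add: Imm_def vec_eq_iff)

lemma Rem_mat_1 [simp]: "Rem (mat 1) = mat 1"
  by (simp add: Rem_def mat_def vec_eq_iff)

lemma Imm_mat_1 [simp]: "Imm (mat 1) = 0"
  by (simp add: Imm_def mat_def vec_eq_iff)

lemma Rem_cmat [simp]: "Rem (cmat B) = B"
  by (simp add: Rem_def cmat_def vec_eq_iff)

lemma Imm_cmat [simp]: "Imm (cmat B) = 0"
  by (simp add: Imm_def cmat_def vec_eq_iff)

lemma norm_cvec [simp]: "norm (cvec x) = norm x"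
  by (simp add: norm_vec_def cvec_def L2_set_def)

lemma norm_square_Rev_Imv: "norm z ^ 2 = norm (Rev z) ^ 2 + norm (Imv z) ^ 2"
  by (simp add: norm_vec_def L2_set_def Rev_def Imv_def cmod_power2 sum.distrib sum_nonneg)

lemma norm_Rev_le: "norm (Rev z) \<le> norm z"
  by (metis norm_square_Rev_Imv le_add_same_cancel1 norm_ge_zero power2_le_imp_le zero_le_power2)

lemma norm_Imv_le: "norm (Imv z) \<le> norm z"
  by (metis norm_square_Rev_Imv le_add_same_cancel2 norm_ge_zero power2_le_imp_le zero_le_power2)

lemma opnorm_Rem_le: "opnorm (Rem A) \<le> opnorm A"
proof (rule opnorm_le)
  fix v
  show "norm (Rem A *v v) \<le> opnorm A * norm v"
    using norm_Rev_le[of "A *v cvec v"] norm_matrix_vector_mult_le[of A "cvec v"]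
    by (simp add: Rev_matrix_vector_mult_cvec)
qed

lemma opnorm_Imm_le: "opnorm (Imm A) \<le> opnorm A"
proof (rule opnorm_le)
  fix v
  show "norm (Imm A *v v) \<le> opnorm A * norm v"
    using norm_Imv_le[of "A *v cvec v"] norm_matrix_vector_mult_le[of A "cvec v"]
    by (simp add: Imv_matrix_vector_mult_cvec)
qed

lemma Re_bil_cvec: "Re (bil u (cvec x)) = Rev u \<bullet> x"
  by (simp add: bil_def cvec_def Rev_def inner_vec_def Re_sum)

lemma Im_bil_cvec: "Im (bil u (cvec x)) = Imv u \<bullet> x"
  by (simp add: bil_def cvec_def Imv_def inner_vec_def Im_sum)

lemma Re_bil_self: "Re (bil z z) = norm (Rev z) ^ 2 - norm (Imv z) ^ 2"
proof -
  have "Re (bil z z) = Rev z \<bullet> Rev z - Imv z \<bullet> Imv z"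
    by (simp add: bil_def Rev_def Imv_def inner_vec_def Re_sum sum_subtractf power2_eq_square)
  then show ?thesis
    by (simp add: power2_norm_eq_inner)
qed

lemma Im_bil_self: "Im (bil z z) = 2 * (Rev z \<bullet> Imv z)"
  by (simp add: bil_def Rev_def Imv_def inner_vec_def Im_sum sum_distrib_left mult_ac)

lemma bil_matrix_vector_mult: "bil (A *v u) v = bil u (transpose A *v v)"
proof -
  have "bil (A *v u) v = (\<Sum>j\<in>UNIV. \<Sum>k\<in>UNIV. A $ j $ k * u $ k * v $ j)"
    by (simp add: bil_def matrix_vector_mult_def sum_distrib_right)
  also have "\<dots> = (\<Sum>k\<in>UNIV. \<Sum>j\<in>UNIV. A $ j $ k * u $ k * v $ j)"
    by (rule sum.swap)
  also have "\<dots> = bil u (transpose A *v v)"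
    by (simp add: bil_def matrix_vector_mult_def transpose_def sum_distrib_left mult_ac
        del: transpose_matrix_vector)
  finally show ?thesis .
qed

lemma opnorm_Rem_matrix_mul_le:
  "opnorm (Rem (A ** B)) \<le> opnorm (Rem A) * opnorm (Rem B) + opnorm (Imm A) * opnorm (Imm B)"
  unfolding Rem_matrix_mul
  by (rule order_trans[OF opnorm_diff_le add_mono[OF opnorm_matrix_mul_le opnorm_matrix_mul_le]])

lemma opnorm_Imm_matrix_mul_le:
  "opnorm (Imm (A ** B)) \<le> opnorm (Rem A) * opnorm (Imm B) + opnorm (Imm A) * opnorm (Rem B)"
  unfolding Imm_matrix_mul
  by (rule order_trans[OF opnorm_add_le add_mono[OF opnorm_matrix_mul_le opnorm_matrix_mul_le]])

lemma Nplus_mono: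
  assumes "z \<in> Nplus d" "0 \<le> d" "d \<le> d'"
  shows "z \<in> Nplus d'"
proof -
  have Im_lt: "\<bar>Im z\<bar> < d * Re z"
    using assms(1) by (simp add: Nplus_def)
  then have "0 < d * Re z"
    using abs_ge_zero[of "Im z"] by linarith
  then have "0 \<le> Re z"
    using assms(2) by (auto simp: zero_less_mult_iff)
  with assms(3) have "d * Re z \<le> d' * Re z"
    by (rule mult_right_mono)
  then show ?thesis
    using Im_lt by (simp add: Nplus_def)
qed

lemma Vd_mono: "z \<in> Vd d \<Longrightarrow> d \<le> d' \<Longrightarrow> z \<in> Vd d'"
  unfolding Vd_def using mult_right_mono[of d d' "norm (Rev z)"] by auto

lemma Md_mono: "A \<in> Md d \<Longrightarrow> d \<le> d' \<Longrightarrow> A \<in> Md d'"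
  unfolding Md_def using mult_right_mono[of d d' "opnorm (Rem A)"] opnorm_nonneg[of "Rem A"] by auto

lemma Mplus_iff_bil_Nplus:
  fixes B :: "complex^'n^'n"
  assumes "transpose B = B"
  shows "B \<in> Mplus d \<longleftrightarrow> (\<forall>x. x \<noteq> 0 \<longrightarrow> bil (B *v cvec x) (cvec x) \<in> Nplus d)"
proof -
  have plus: "v \<bullet> ((d *\<^sub>R Rem B + Imm B) *v v) =
      d * (v \<bullet> (Rem B *v v)) + v \<bullet> (Imm B *v v)" for v
    by (simp add: matrix_vector_mult_add_rdistrib inner_add_right flip: scaleR_matrix_vector_assoc)
  have minus: "v \<bullet> ((d *\<^sub>R Rem B - Imm B) *v v) =
      d * (v \<bullet> (Rem B *v v)) - v \<bullet> (Imm B *v v)" for v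
    by (simp add: matrix_vector_mult_diff_rdistrib inner_diff_right flip: scaleR_matrix_vector_assoc)
  have Nplus: "bil (B *v cvec x) (cvec x) \<in> Nplus d \<longleftrightarrow>
      \<bar>x \<bullet> (Imm B *v x)\<bar> < d * (x \<bullet> (Rem B *v x))" for x
    by (simp add: Nplus_def Re_bil_cvec Im_bil_cvec Rev_matrix_vector_mult_cvec
        Imv_matrix_vector_mult_cvec inner_commute)
  show ?thesis
    unfolding Mplus_def pos_def_def using assms plus minus Nplus by (auto simp: abs_less_iff)
qed

lemma bil_self_in_Nplus:
  fixes z :: "complex^'n"
  assumes "z \<in> Vd d" "d \<le> 1/2"
  shows "bil z z \<in> Nplus (4 * d)"
proof -
  define r where "r = norm (Rev z)"
  define i where "i = norm (Imv z)"
  have i_lt: "i < d * r" and i_ge: "0 \<le> i" and r_ge: "0 \<le> r"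
    using assms(1) by (simp_all add: Vd_def r_def i_def)
  then have "0 < d * r"
    by linarith
  then have "0 < d" "0 < r"
    using r_ge by (auto simp: zero_less_mult_iff)
  have "i \<le> r / 2"
    using i_lt mult_right_mono[OF assms(2) r_ge] by simp
  then have "i\<^sup>2 \<le> (r / 2)\<^sup>2"
    using i_ge by (rule power_mono)
  then have i_sq: "i\<^sup>2 \<le> r\<^sup>2 / 4"
    by (simp add: power_divide)
  have "\<bar>Im (bil z z)\<bar> \<le> 2 * r * i"
    using Cauchy_Schwarz_ineq2[of "Rev z" "Imv z"] by (simp add: Im_bil_self r_def i_def abs_mult)
  also have "\<dots> < 2 * d * r\<^sup>2"
    using i_lt \<open>0 < r\<close> by (simp add: power2_eq_square)
  also have "\<dots> \<le> 4 * d * (r\<^sup>2 - i\<^sup>2)"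
  proof -
    have "r\<^sup>2 / 2 \<le> r\<^sup>2 - i\<^sup>2"
      using i_sq zero_le_power2[of i] by linarith
    then show ?thesis
      using mult_left_mono[of "r\<^sup>2 / 2" "r\<^sup>2 - i\<^sup>2" "4 * d"] \<open>0 < d\<close> by simp
  qed
  finally show ?thesis
    by (simp add: Nplus_def Re_bil_self r_def i_def)
qed

lemma Vd_if_near_real_vector:
  fixes w :: "complex^'n"
  assumes "y \<noteq> 0" "e < d" "d \<le> 1/2"
    and Rev_near: "norm (Rev w - y) \<le> e * norm y" and Imv_small: "norm (Imv w) \<le> e * norm y"
  shows "w \<in> Vd (2 * d)"
proof -
  have y_pos: "0 < norm y"
    using assms(1) by simp
  have "e * norm y < d * norm y"
    using assms(2) y_pos by simp
  moreover have "d * norm y \<le> norm y / 2"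
    using mult_right_mono[OF assms(3), of "norm y"] by simp
  moreover have "norm y - norm (Rev w) \<le> norm (Rev w - y)"
    using norm_triangle_ineq2[of y "Rev w"] by (simp add: norm_minus_commute)
  ultimately have Rev_large: "norm y / 2 \<le> norm (Rev w)"
    using Rev_near by linarith
  have "0 \<le> e * norm y"
    using Imv_small norm_ge_zero order_trans by blast
  then have "0 \<le> d"
    using assms(2) y_pos by (simp add: zero_le_mult_iff)
  have "norm (Imv w) < d * norm y"
    using Imv_small \<open>e * norm y < d * norm y\<close> by linarith
  also have "\<dots> \<le> 2 * d * norm (Rev w)"
    using mult_left_mono[OF Rev_large, of "2 * d"] \<open>0 \<le> d\<close> by simp
  finally show ?thesis
    by (simp add: Vd_def)
qed

lemma transpose_Ed_mult_cvec_in_Vd: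
  fixes h :: "complex^'n^'n"
  assumes "h \<in> Ed d" "x \<noteq> 0" "d \<le> 1/2"
  shows "transpose h *v cvec x \<in> Vd (2 * d)"
proof -
  obtain g p where h: "h = cmat g ** p" and "det g > 0" and p: "opnorm (p - mat 1) < d"
    using assms(1) unfolding Ed_def by blast
  define y where "y = x v* g"
  have "invertible (transpose g)"
    using \<open>det g > 0\<close> by (simp add: invertible_det_nz)
  then have "y \<noteq> 0"
    using assms(2) matrix_left_invertible_ker[of "transpose g"] by (auto simp: y_def invertible_def)
  have w: "transpose h *v cvec x = cvec y v* p"
    by (simp add: h y_def vector_matrix_mul_assoc cvec_vector_matrix_mult_cmat flip: vector_matrix_mul_assoc)
  have "Rev (cvec y v* p) - y = y v* Rem (p - mat 1)"
    by (simp add: Rev_cvec_vector_matrix_mult Rem_diff vector_matrix_mult_diff_rdistrib)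
  then have "norm (Rev (cvec y v* p) - y) \<le> opnorm (p - mat 1) * norm y"
    using order_trans[OF norm_vector_matrix_mult_le mult_right_mono[OF opnorm_Rem_le norm_ge_zero]]
    by simp
  moreover have "Imv (cvec y v* p) = y v* Imm (p - mat 1)"
    by (simp add: Imv_cvec_vector_matrix_mult Imm_diff)
  then have "norm (Imv (cvec y v* p)) \<le> opnorm (p - mat 1) * norm y"
    using order_trans[OF norm_vector_matrix_mult_le mult_right_mono[OF opnorm_Imm_le norm_ge_zero]]
    by simp
  ultimately show ?thesis
    unfolding w using Vd_if_near_real_vector \<open>y \<noteq> 0\<close> p assms(3) by blast
qed

lemma Ed_mult_transpose_in_Mplus:
  fixes h :: "complex^'n^'n"
  assumes "h \<in> Ed d" "d \<le> 1/4"
  shows "h ** transpose h \<in> Mplus (8 * d)"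
proof -
  have "bil ((h ** transpose h) *v cvec x) (cvec x) \<in> Nplus (4 * (2 * d))" if "x \<noteq> 0" for x
  proof -
    define w where "w = transpose h *v cvec x"
    have "bil ((h ** transpose h) *v cvec x) (cvec x) = bil w w"
      by (simp add: w_def bil_matrix_vector_mult flip: matrix_vector_mul_assoc
          del: transpose_matrix_vector)
    moreover have "w \<in> Vd (2 * d)"
      unfolding w_def using transpose_Ed_mult_cvec_in_Vd[OF assms(1) that] assms(2) by simp
    ultimately show ?thesis
      using bil_self_in_Nplus[of w "2 * d"] assms(2) by simp
  qed
  then show ?thesis
    using Mplus_iff_bil_Nplus[of "h ** transpose h"] by (simp add: matrix_transpose_mul)
qed

text \<open>Since \<open>Imm A\<close> is at most \<open>Rem A / 4\<close>, such a perturbation keeps \<open>Rem A'\<close> above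
  \<open>11/16\<close> of \<open>Rem A\<close> and \<open>Imm A'\<close> below \<open>9/4 \<cdot> d \<cdot> Rem A\<close> (in operator norm).\<close>

lemma Md_if_near:
  fixes A A' :: "complex^'n^'n"
  assumes "A \<in> Md d" "e < d" "d \<le> 1/4"
    and Rem_near: "opnorm (Rem A' - Rem A) \<le> (opnorm (Rem A) + opnorm (Imm A)) * e"
    and Imm_near: "opnorm (Imm A' - Imm A) \<le> (opnorm (Rem A) + opnorm (Imm A)) * e"
  shows "A' \<in> Md (4 * d)"
proof -
  define a b where "a = opnorm (Rem A)" and "b = opnorm (Imm A)"
  have b_lt: "b < d * a" and b_ge: "0 \<le> b" and a_ge: "0 \<le> a"
    using assms(1) by (simp_all add: Md_def a_def b_def opnorm_nonneg)
  then have "0 < d * a"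
    by linarith
  then have "0 < d"
    using a_ge by (auto simp: zero_less_mult_iff)
  have "d * a \<le> a / 4"
    using mult_right_mono[OF assms(3) a_ge] by simp
  have "(a + b) * e \<le> (a + b) * d"
    using assms(2) a_ge b_ge by (intro mult_left_mono) auto
  also have "\<dots> \<le> (5/4) * (d * a)"
    using mult_left_mono[of b "a / 4" d] b_lt \<open>d * a \<le> a / 4\<close> \<open>0 < d\<close>
    by (simp add: algebra_simps)
  finally have perturbation: "(a + b) * e \<le> (5/4) * (d * a)" .
  have "opnorm (Rem A) \<le> opnorm (Rem A') + opnorm (Rem A' - Rem A)"
    using opnorm_diff_le[of "Rem A'" "Rem A' - Rem A"] by simp
  then have "(11/16) * a \<le> opnorm (Rem A')"
    using Rem_near perturbation \<open>d * a \<le> a / 4\<close> unfolding a_def b_def by linarith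
  then have "(11/4) * (d * a) \<le> 4 * d * opnorm (Rem A')"
    using mult_left_mono[of "(11/16) * a" "opnorm (Rem A')" "4 * d"] \<open>0 < d\<close> by simp
  moreover have "opnorm (Imm A') \<le> opnorm (Imm A) + opnorm (Imm A' - Imm A)"
    using opnorm_add_le[of "Imm A" "Imm A' - Imm A"] by simp
  ultimately show ?thesis
    using Imm_near perturbation b_lt \<open>0 < d * a\<close> unfolding Md_def a_def b_def by simp
qed

lemma Md_matrix_mul_near_identity:
  fixes A B :: "complex^'n^'n"
  assumes A: "A \<in> Md d" and B: "opnorm (B - mat 1) < d" and "d \<le> 1/4"
  shows "A ** B \<in> Md (4 * d)" "B ** A \<in> Md (4 * d)"
proof -
  define E a b e where "E = B - mat 1" and "a = opnorm (Rem A)" and "b = opnorm (Imm A)"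
    and "e = opnorm (B - mat 1)"
  have Rem_E: "opnorm (Rem E) \<le> e" and Imm_E: "opnorm (Imm E) \<le> e"
    by (simp_all add: E_def e_def opnorm_Rem_le opnorm_Imm_le)
  have weighted: "a * u + b * v \<le> (a + b) * e" if "u \<le> e" "v \<le> e" for u v
    using mult_left_mono[OF that(1), of a] mult_left_mono[OF that(2), of b]
    by (simp add: a_def b_def opnorm_nonneg distrib_right)
  have "B = mat 1 + E"
    by (simp add: E_def)
  then have AB: "A ** B = A + A ** E" and BA: "B ** A = A + E ** A"
    by (simp_all add: matrix_add_ldistrib matrix_add_rdistrib)
  have "e < d"
    using B by (simp add: e_def)
  show "A ** B \<in> Md (4 * d)"
  proof (rule Md_if_near[OF A \<open>e < d\<close> assms(3)], unfold a_def[symmetric] b_def[symmetric])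
    show "opnorm (Rem (A ** B) - Rem A) \<le> (a + b) * e"
      using opnorm_Rem_matrix_mul_le[of A E] weighted[OF Rem_E Imm_E]
      by (simp add: AB Rem_add a_def b_def)
    show "opnorm (Imm (A ** B) - Imm A) \<le> (a + b) * e"
      using opnorm_Imm_matrix_mul_le[of A E] weighted[OF Imm_E Rem_E]
      by (simp add: AB Imm_add a_def b_def)
  qed
  show "B ** A \<in> Md (4 * d)"
  proof (rule Md_if_near[OF A \<open>e < d\<close> assms(3)], unfold a_def[symmetric] b_def[symmetric])
    show "opnorm (Rem (B ** A) - Rem A) \<le> (a + b) * e"
      using opnorm_Rem_matrix_mul_le[of E A] weighted[OF Rem_E Imm_E]
      by (simp add: BA Rem_add a_def b_def mult.commute)
    show "opnorm (Imm (B ** A) - Imm A) \<le> (a + b) * e"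
      using opnorm_Imm_matrix_mul_le[of E A] weighted[OF Imm_E Rem_E]
      by (simp add: BA Imm_add a_def b_def mult.commute add.commute)
  qed
qed

lemma Md_matrix_mul_orthogonal:
  fixes A :: "complex^'n^'n" and B :: "real^'n^'n"
  assumes "A \<in> Md d" "orthogonal_matrix B"
  shows "A ** cmat B \<in> Md d" "cmat B ** A \<in> Md d"
  using assms
  by (simp_all add: Md_def Rem_matrix_mul Imm_matrix_mul opnorm_matrix_mul_orthogonal_right
      opnorm_matrix_mul_orthogonal_left)

theorem lemma6p1:
  shows "\<exists>C::real. \<exists>\<delta>0::real. C > 0 \<and> \<delta>0 > 0 \<and>
    (\<forall>\<delta>. 0 < \<delta> \<and> \<delta> < \<delta>0 \<longrightarrow>
      (\<forall>B::complex^'n^'n. transpose B = B \<longrightarrow>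
          (B \<in> Mplus \<delta> \<longleftrightarrow> (\<forall>x::real^'n. x \<noteq> 0 \<longrightarrow> bil (B *v cvec x) (cvec x) \<in> Nplus \<delta>))) \<and>
      (\<forall>h::complex^'n^'n. \<forall>x::real^'n. h \<in> Ed \<delta> \<and> x \<noteq> 0 \<longrightarrow> transpose h *v cvec x \<in> Vd (C * \<delta>)) \<and>
      (\<forall>z::complex^'n. z \<in> Vd \<delta> \<and> z \<noteq> 0 \<longrightarrow> bil z z \<in> Nplus (C * \<delta>)) \<and>
      (\<forall>h::complex^'n^'n. h \<in> Ed \<delta> \<longrightarrow> h ** transpose h \<in> Mplus (C * \<delta>)) \<and>
      (\<forall>A B::complex^'n^'n. A \<in> Md \<delta> \<and> opnorm (B - mat 1) < \<delta> \<longrightarrow>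
          A ** B \<in> Md (C * \<delta>) \<and> B ** A \<in> Md (C * \<delta>)) \<and>
      (\<forall>(A::complex^'n^'n) (B::real^'n^'n). A \<in> Md \<delta> \<and> orthogonal_matrix B \<and> det B = 1 \<longrightarrow>
          A ** cmat B \<in> Md (C * \<delta>) \<and> cmat B ** A \<in> Md (C * \<delta>)))"
proof (rule exI[of _ 8], rule exI[of _ "1/4"], intro conjI allI impI)
  fix \<delta> :: real
  assume "0 < \<delta> \<and> \<delta> < 1/4"
  then have "0 < \<delta>" "\<delta> \<le> 1/4"
    by simp_all
  show "B \<in> Mplus \<delta> \<longleftrightarrow> (\<forall>x. x \<noteq> 0 \<longrightarrow> bil (B *v cvec x) (cvec x) \<in> Nplus \<delta>)"
    if "transpose B = B" for B :: "complex^'n^'n"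
    using Mplus_iff_bil_Nplus[OF that] .
  show "transpose h *v cvec x \<in> Vd (8 * \<delta>)" if "h \<in> Ed \<delta> \<and> x \<noteq> 0"
    for h :: "complex^'n^'n" and x :: "real^'n"
  proof (rule Vd_mono)
    show "transpose h *v cvec x \<in> Vd (2 * \<delta>)"
      using transpose_Ed_mult_cvec_in_Vd[of h \<delta> x] that \<open>\<delta> \<le> 1/4\<close> by simp
  qed (use \<open>0 < \<delta>\<close> in simp)
  show "bil z z \<in> Nplus (8 * \<delta>)" if "z \<in> Vd \<delta> \<and> z \<noteq> 0" for z :: "complex^'n"
    using bil_self_in_Nplus[of z \<delta>] Nplus_mono[of _ "4 * \<delta>"] that \<open>0 < \<delta>\<close> \<open>\<delta> \<le> 1/4\<close>
    by simp
  show "h ** transpose h \<in> Mplus (8 * \<delta>)" if "h \<in> Ed \<delta>" for h :: "complex^'n^'n"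
    using Ed_mult_transpose_in_Mplus[OF that \<open>\<delta> \<le> 1/4\<close>] .
  show "A ** B \<in> Md (8 * \<delta>)" "B ** A \<in> Md (8 * \<delta>)"
    if "A \<in> Md \<delta> \<and> opnorm (B - mat 1) < \<delta>" for A B :: "complex^'n^'n"
    using Md_matrix_mul_near_identity[of A \<delta> B] Md_mono[of _ "4 * \<delta>" "8 * \<delta>"] that \<open>0 < \<delta>\<close>
      \<open>\<delta> \<le> 1/4\<close>
    by auto
  show "A ** cmat B \<in> Md (8 * \<delta>)" "cmat B ** A \<in> Md (8 * \<delta>)"
    if "A \<in> Md \<delta> \<and> orthogonal_matrix B \<and> det B = 1" for A :: "complex^'n^'n" and B :: "real^'n^'n"
    using Md_matrix_mul_orthogonal[of A \<delta> B] Md_mono[of _ \<delta> "8 * \<delta>"] that \<open>0 < \<delta>\<close> by auto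
qed simp_all

end
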